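(* Let $k\ge 1$, let $n_0,n_1,\dots,n_k$ be positive integers, $n^{*}=n_0+n_1+\cdots+n_k$, and let $\sigma_0,\dots,\sigma_k>0$. Let $h:[0,\infty)\to[0,\infty)$ be a function such that $$\prod_{i=0}^{k}\sigma_i^{-n_i}\,h\!\left(\sum_{i=0}^{k}\sigma_i^{-2}\|\mathbf{x}_i\|^{2}\right)$$ is a probability density on $\mathbb{R}^{n^{*}}$, and let $(\mathbf{x}_0',\dots,\mathbf{x}_k')'$, $\mathbf{x}_i\in\mathbb{R}^{n_i}$, have this density. Let $s_0=\|\mathbf{x}_0\|^2$, $\mathbf{t}_i=s_0^{-1/2}\mathbf{x}_i$ and $\beta_i=\sigma_i^{2}/\sigma_0^{2}$ for $i=1,\dots,k$. Then $(\mathbf{t}_1,\dots,\mathbf{t}_k)$ has density on $\mathbb{R}^{n_1}\times\cdots\times\mathbb{R}^{n_k}$ $$\frac{\Gamma[n^{*}/2]\prod_{i=1}^{k}\beta_i^{-n_i/2}}{\Gamma[n_0/2]\,\pi^{(n_1+\cdots+n_k)/2}}\left(1+\sum_{i=1}^{k}\beta_i^{-1}\|\mathbf{t}_i\|^{2}\right)^{-n^{*}/2},$$ which in particular does not depend on $h$.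
   Context: $\|\cdot\|$ denotes the Euclidean norm. The law of $(\mathbf{t}_1,\dots,\mathbf{t}_k)$ is called the multivector variate $t$ distribution. *)

theory Defs
  imports "HOL-Probability.Probability"
begin

text \<open>Coordinates of a block vector: the vector (x_a,...,x_b), with x_i in R^(n i),
  is a function on the index set of pairs (i,j) with a <= i <= b and j < n i.\<close>
definition blk_idx :: "(nat \<Rightarrow> nat) \<Rightarrow> nat \<Rightarrow> nat \<Rightarrow> (nat \<times> nat) set" where
  "blk_idx n a b = {(i, j). a \<le> i \<and> i \<le> b \<and> j < n i}"

definition blk_lebesgue :: "(nat \<Rightarrow> nat) \<Rightarrow> nat \<Rightarrow> nat \<Rightarrow> ((nat \<times> nat) \<Rightarrow> real) measure" where
  "blk_lebesgue n a b = (\<Pi>\<^sub>M p\<in>blk_idx n a b. lborel)"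

definition blk_sqnorm :: "(nat \<Rightarrow> nat) \<Rightarrow> ((nat \<times> nat) \<Rightarrow> real) \<Rightarrow> nat \<Rightarrow> real" where
  "blk_sqnorm n x i = (\<Sum>j<n i. (x (i, j))\<^sup>2)"

end

theory Submission
  imports Defs
begin

text \<open>
  Split \<open>x = (z, y)\<close> into the block \<open>z = x\<^sub>0\<close> and the remaining blocks \<open>y\<close>, and put
  \<open>r = |z|\<close>. Substituting \<open>y = r t\<close> in the inner integral shows that \<open>t = y / r\<close> has
  density \<open>t \<mapsto> \<integral> r\<^sup>m f(z, r t) dz\<close>, where \<open>m\<close> is the dimension of \<open>y\<close>. For an
  elliptical density \<open>f(z, y) = F(|z|\<^sup>2 + \<Sum> w\<^sub>q y\<^sub>q\<^sup>2)\<close> the integrand is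
  \<open>r\<^sup>m F((1 + u(t)) |z|\<^sup>2)\<close> with \<open>u(t) = \<Sum> w\<^sub>q t\<^sub>q\<^sup>2\<close>, and the radial substitution
  \<open>z \<mapsto> (1 + u(t))\<^sup>-\<^sup>1\<^sup>/\<^sup>2 z\<close> turns the integral into \<open>(1 + u(t))\<^sup>-\<^sup>N\<^sup>/\<^sup>2\<close> times a
  constant depending on \<open>F\<close> only. Total mass one determines that constant; the integral
  of \<open>(1 + u)\<^sup>-\<^sup>p\<close> is computed by writing it as a Gamma mixture of Gaussian kernels
  \<open>exp (- s u)\<close>.
\<close>

lemma ennreal_eq_divide_of_mult_eq:
  assumes "c > 0" "d \<ge> 0" "ennreal c * X = ennreal d"
  shows "X = ennreal (d / c)"
proof -
  have "X = ennreal (1 / c) * (ennreal c * X)"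
    using assms(1) by (simp add: mult.assoc[symmetric] ennreal_mult'[symmetric])
  then show ?thesis
    using assms by (simp add: ennreal_mult'[symmetric])
qed

lemma sqrt_powr_neg_one_power:
  assumes "x > (0::real)"
  shows "sqrt (x powr (-1)) ^ m = x powr (- real m / 2)"
proof -
  have "sqrt (x powr (-1)) = (x powr (-1)) powr (1 / 2)"
    by (rule powr_half_sqrt[symmetric]) simp
  also have "\<dots> = x powr (-1 / 2)"
    by (simp only: powr_powr) simp
  finally show ?thesis
    using assms by (simp add: powr_power)
qed

section \<open>Gaussian and Gamma integrals\<close>

lemma nn_integral_exp_neg_square:
  assumes "c > (0::real)"
  shows "(\<integral>\<^sup>+x. ennreal (exp (- (c * x\<^sup>2))) \<partial>lborel) = ennreal (sqrt (pi / c))"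
proof -
  define \<sigma> where "\<sigma> = sqrt (1 / (2 * c))"
  have \<sigma>: "\<sigma> > 0" "\<sigma>\<^sup>2 = 1 / (2 * c)"
    unfolding \<sigma>_def using assms by simp_all
  interpret prob_space "density lborel (normal_density 0 \<sigma>)"
    using \<sigma>(1) by (rule prob_space_normal_density)
  have "normal_density 0 \<sigma> x = sqrt (c / pi) * exp (- (c * x\<^sup>2))" for x
  proof -
    have "2 * pi * \<sigma>\<^sup>2 = pi / c" "- (x - 0)\<^sup>2 / (2 * \<sigma>\<^sup>2) = - (c * x\<^sup>2)"
      using \<sigma>(2) assms by simp_all
    then show ?thesis
      unfolding normal_density_def using assms by (simp add: real_sqrt_divide)
  qed
  then have "1 = (\<integral>\<^sup>+x. ennreal (sqrt (c / pi)) * ennreal (exp (- (c * x\<^sup>2))) \<partial>lborel)"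
    using emeasure_space_1 assms by (simp add: emeasure_density ennreal_mult'[symmetric])
  also have "\<dots> = ennreal (sqrt (c / pi)) * (\<integral>\<^sup>+x. ennreal (exp (- (c * x\<^sup>2))) \<partial>lborel)"
    by (rule nn_integral_cmult) measurable
  finally show ?thesis
    using ennreal_eq_divide_of_mult_eq[of "sqrt (c / pi)" 1] assms by (simp add: real_sqrt_divide)
qed

lemma nn_integral_Gamma_rate:
  assumes "a > 0" "b > (0::real)"
  shows "(\<integral>\<^sup>+s. ennreal (indicator {0..} s * s powr (a - 1) * exp (- (b * s))) \<partial>lborel)
           = ennreal (Gamma a / b powr a)"
proof -
  have "ennreal (Gamma a) = (\<integral>\<^sup>+x. ennreal (indicator {0..} x * (x powr (a - 1) / exp x)) \<partial>lborel)"
    by (rule nn_integral_has_integral_lebesgue[OF _ Gamma_integral_real[OF assms(1)], symmetric]) simp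
  also have "\<dots> = ennreal b
      * (\<integral>\<^sup>+s. ennreal (indicator {0..} (b * s) * ((b * s) powr (a - 1) / exp (b * s))) \<partial>lborel)"
    using assms by (subst nn_integral_real_affine[where c=b and t=0]) auto
  also have "\<dots> = ennreal b * (\<integral>\<^sup>+s. ennreal (b powr (a - 1))
      * ennreal (indicator {0..} s * s powr (a - 1) * exp (- (b * s))) \<partial>lborel)"
    using assms
    by (intro arg_cong2[where f="(*)"] nn_integral_cong refl)
       (auto simp: ennreal_mult'[symmetric] powr_mult exp_minus divide_inverse zero_le_mult_iff
             split: split_indicator)
  also have "\<dots> = ennreal (b powr a)
      * (\<integral>\<^sup>+s. ennreal (indicator {0..} s * s powr (a - 1) * exp (- (b * s))) \<partial>lborel)"
    using assms
    by (subst nn_integral_cmult) (auto simp: mult.assoc[symmetric] ennreal_mult'[symmetric] powr_diff)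
  finally show ?thesis
    using assms ennreal_eq_divide_of_mult_eq[of "b powr a" "Gamma a"] by simp
qed

section \<open>Integrals over finite products of Lebesgue measure\<close>

lemma nn_integral_PiM_lborel_scale:
  fixes F :: "('i \<Rightarrow> real) \<Rightarrow> ennreal"
  assumes "finite J" "c > 0" "F \<in> borel_measurable (PiM J (\<lambda>_. lborel))"
  shows "(\<integral>\<^sup>+y. F y \<partial>PiM J (\<lambda>_. lborel))
           = ennreal (c ^ card J) * (\<integral>\<^sup>+t. F (\<lambda>p\<in>J. c * t p) \<partial>PiM J (\<lambda>_. lborel))"
  using assms(1,3)
proof (induction J arbitrary: F rule: finite_induct)
  case empty
  interpret product_sigma_finite "\<lambda>_. lborel" by standard
  show ?case
    using nn_integral_empty[of F] nn_integral_empty[of "\<lambda>t. F (\<lambda>p\<in>{}. c * t p)"]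
    by (simp add: restrict_def)
next
  case (insert i J)
  interpret product_sigma_finite "\<lambda>_. lborel" by standard
  note [measurable] = insert.prems
  have "(\<integral>\<^sup>+y. F y \<partial>PiM (insert i J) (\<lambda>_. lborel))
      = (\<integral>\<^sup>+x. \<integral>\<^sup>+y. F (x(i := y)) \<partial>lborel \<partial>PiM J (\<lambda>_. lborel))"
    using insert by (subst product_nn_integral_insert) auto
  also have "\<dots> = (\<integral>\<^sup>+x. ennreal c * \<integral>\<^sup>+y. F (x(i := c * y)) \<partial>lborel \<partial>PiM J (\<lambda>_. lborel))"
    using assms(2) by (intro nn_integral_cong, subst nn_integral_real_affine[where c=c and t=0]) auto
  also have "\<dots> = ennreal c * (\<integral>\<^sup>+x. \<integral>\<^sup>+y. F (x(i := c * y)) \<partial>lborel \<partial>PiM J (\<lambda>_. lborel))"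
    by (rule nn_integral_cmult) measurable
  also have "(\<integral>\<^sup>+x. \<integral>\<^sup>+y. F (x(i := c * y)) \<partial>lborel \<partial>PiM J (\<lambda>_. lborel))
     = ennreal (c ^ card J) * (\<integral>\<^sup>+t. \<integral>\<^sup>+y. F ((\<lambda>p\<in>J. c * t p)(i := c * y)) \<partial>lborel \<partial>PiM J (\<lambda>_. lborel))"
    by (rule insert.IH) measurable
  also have "(\<integral>\<^sup>+t. \<integral>\<^sup>+y. F ((\<lambda>p\<in>J. c * t p)(i := c * y)) \<partial>lborel \<partial>PiM J (\<lambda>_. lborel))
     = (\<integral>\<^sup>+t. F (\<lambda>p\<in>insert i J. c * t p) \<partial>PiM (insert i J) (\<lambda>_. lborel))"
    using insert by (subst product_nn_integral_insert) (auto intro!: nn_integral_cong arg_cong[where f=F])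
  finally show ?case
    using insert assms(2) by (simp add: ennreal_mult' mult.assoc del: restrict_apply)
qed

lemma prod_sqrt_pi_divide:
  "finite L \<Longrightarrow> (\<Prod>q\<in>L. sqrt (pi / w q)) = pi powr (real (card L) / 2) / (\<Prod>q\<in>L. sqrt (w q))"
  by (simp add: real_sqrt_divide prod_dividef powr_half_sqrt[symmetric] powr_power)

lemma nn_integral_PiM_exp_neg_weighted_square:
  assumes "finite L" "\<forall>q\<in>L. w q > 0"
  shows "(\<integral>\<^sup>+t. ennreal (exp (- (\<Sum>q\<in>L. w q * (t q)\<^sup>2))) \<partial>PiM L (\<lambda>_. lborel))
           = ennreal (pi powr (real (card L) / 2) / (\<Prod>q\<in>L. sqrt (w q)))"
proof -
  interpret product_sigma_finite "\<lambda>_. lborel" by standard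
  have "(\<integral>\<^sup>+t. ennreal (exp (- (\<Sum>q\<in>L. w q * (t q)\<^sup>2))) \<partial>PiM L (\<lambda>_. lborel))
      = (\<integral>\<^sup>+t. (\<Prod>q\<in>L. ennreal (exp (- (w q * (t q)\<^sup>2)))) \<partial>PiM L (\<lambda>_. lborel))"
    by (simp add: exp_sum[OF assms(1)] sum_negf[symmetric] prod_ennreal)
  also have "\<dots> = (\<Prod>q\<in>L. \<integral>\<^sup>+x. ennreal (exp (- (w q * x\<^sup>2))) \<partial>lborel)"
    by (rule product_nn_integral_prod[OF assms(1)]) measurable
  also have "\<dots> = (\<Prod>q\<in>L. ennreal (sqrt (pi / w q)))"
    using assms(2) by (intro prod.cong refl nn_integral_exp_neg_square) simp
  also have "\<dots> = ennreal (\<Prod>q\<in>L. sqrt (pi / w q))"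
    using assms(2) by (intro prod_ennreal) (auto simp: less_imp_le)
  finally show ?thesis
    by (simp add: prod_sqrt_pi_divide[OF assms(1)])
qed

lemma nn_integral_PiM_exp_neg_scaled_weighted_square:
  assumes "finite L" "\<forall>q\<in>L. w q > 0" "s > 0"
  shows "(\<integral>\<^sup>+t. ennreal (exp (- (s * (\<Sum>q\<in>L. w q * (t q)\<^sup>2)))) \<partial>PiM L (\<lambda>_. lborel))
           = ennreal (s powr (- real (card L) / 2) * (pi powr (real (card L) / 2) / (\<Prod>q\<in>L. sqrt (w q))))"
proof -
  have "(\<Prod>q\<in>L. sqrt (w q * s)) = (\<Prod>q\<in>L. sqrt (w q)) * s powr (real (card L) / 2)"
    using assms(3) by (simp add: real_sqrt_mult prod.distrib powr_half_sqrt[symmetric] powr_power)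
  then show ?thesis
    using nn_integral_PiM_exp_neg_weighted_square[OF assms(1), of "\<lambda>q. w q * s"] assms(2,3)
    by (simp add: sum_distrib_left powr_minus field_simps)
qed

lemma powr_neg_eq_Gamma_mixture:
  assumes "p > 0" "u \<ge> (0::real)"
  shows "ennreal ((1 + u) powr (- p))
           = ennreal (1 / Gamma p) * (\<integral>\<^sup>+s. ennreal (indicator {0..} s * s powr (p - 1) * exp (- s))
                                           * ennreal (exp (- (s * u))) \<partial>lborel)"
proof -
  have "Gamma p \<noteq> 0"
    using Gamma_real_pos[OF assms(1)] by simp
  moreover have "exp (- s) * exp (- (s * u)) = exp (- ((1 + u) * s))" for s
    by (simp add: exp_add[symmetric] algebra_simps)
  ultimately show ?thesis
    using nn_integral_Gamma_rate[of p "1 + u"] assms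
    by (simp add: ennreal_mult'[symmetric] powr_minus divide_inverse mult.assoc)
qed

lemma nn_integral_multivariate_t_kernel:
  assumes L: "finite L" and w: "\<forall>q\<in>L. w q > 0" and p: "p > real (card L) / 2"
  shows "(\<integral>\<^sup>+t. ennreal ((1 + (\<Sum>q\<in>L. w q * (t q)\<^sup>2)) powr (- p)) \<partial>PiM L (\<lambda>_. lborel))
           = ennreal (Gamma (p - real (card L) / 2) * pi powr (real (card L) / 2)
                        / (Gamma p * (\<Prod>q\<in>L. sqrt (w q))))"
proof -
  interpret product_sigma_finite "\<lambda>_. lborel" by standard
  interpret P: sigma_finite_measure "PiM L (\<lambda>_. lborel)" by (rule sigma_finite[OF L])
  interpret pair_sigma_finite lborel "PiM L (\<lambda>_. lborel)" by standard
  define m where "m = real (card L)"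
  define C where "C = pi powr (m / 2) / (\<Prod>q\<in>L. sqrt (w q))"
  define G where "G s = indicator {0..} s * s powr (p - 1) * exp (- s)" for s :: real
  define E where "E s t = exp (- (s * (\<Sum>q\<in>L. w q * (t q)\<^sup>2)))" for s :: real and t :: "'a \<Rightarrow> real"
  have p0: "p > 0" and pm: "p - m / 2 > 0"
    using p by (simp_all add: m_def)
  have C: "C \<ge> 0"
    unfolding C_def using w by (intro divide_nonneg_nonneg prod_nonneg) (auto simp: less_imp_le)
  have [measurable]: "(\<lambda>(s, t). ennreal (G s) * ennreal (E s t)) \<in> borel_measurable (lborel \<Otimes>\<^sub>M PiM L (\<lambda>_. lborel))"
    unfolding G_def E_def by measurable
  have [measurable]: "E s \<in> borel_measurable (PiM L (\<lambda>_. lborel))" for s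
    unfolding E_def by measurable
  have mixture: "ennreal ((1 + (\<Sum>q\<in>L. w q * (t q)\<^sup>2)) powr (- p))
      = ennreal (1 / Gamma p) * (\<integral>\<^sup>+s. ennreal (G s) * ennreal (E s t) \<partial>lborel)" for t
    unfolding G_def E_def using w
    by (intro powr_neg_eq_Gamma_mixture p0 sum_nonneg) (auto simp: less_imp_le)
  have inner: "(\<integral>\<^sup>+t. ennreal (G s) * ennreal (E s t) \<partial>PiM L (\<lambda>_. lborel))
      = ennreal C * ennreal (indicator {0..} s * s powr (p - m / 2 - 1) * exp (- (1 * s)))" for s
  proof (cases "s > 0")
    case True
    have "(\<integral>\<^sup>+t. ennreal (E s t) \<partial>PiM L (\<lambda>_. lborel)) = ennreal (s powr (- m / 2) * C)"
      unfolding E_def C_def m_def by (rule nn_integral_PiM_exp_neg_scaled_weighted_square[OF L w True])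
    moreover have "s powr (p - 1) * (s powr (- m / 2) * C) = C * s powr (p - m / 2 - 1)"
      by (simp add: powr_add[symmetric] algebra_simps)
    ultimately show ?thesis
      using True C by (subst nn_integral_cmult) (auto simp: G_def ennreal_mult'[symmetric] mult_ac)
  next
    case False
    then have "G s = 0" "indicator {0..} s * s powr (p - m / 2 - 1) = (0::real)"
      by (auto simp: G_def indicator_def)
    then show ?thesis
      by simp
  qed
  have "(\<integral>\<^sup>+t. ennreal ((1 + (\<Sum>q\<in>L. w q * (t q)\<^sup>2)) powr (- p)) \<partial>PiM L (\<lambda>_. lborel))
      = ennreal (1 / Gamma p) * (\<integral>\<^sup>+t. \<integral>\<^sup>+s. ennreal (G s) * ennreal (E s t) \<partial>lborel \<partial>PiM L (\<lambda>_. lborel))"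
    unfolding mixture by (rule nn_integral_cmult) measurable
  also have "(\<integral>\<^sup>+t. \<integral>\<^sup>+s. ennreal (G s) * ennreal (E s t) \<partial>lborel \<partial>PiM L (\<lambda>_. lborel))
      = (\<integral>\<^sup>+s. ennreal C * ennreal (indicator {0..} s * s powr (p - m / 2 - 1) * exp (- (1 * s))) \<partial>lborel)"
    by (subst Fubini') (simp_all add: inner)
  also have "\<dots> = ennreal C * ennreal (Gamma (p - m / 2))"
    using nn_integral_Gamma_rate[OF pm, of 1] by (subst nn_integral_cmult) simp_all
  also have "ennreal (1 / Gamma p) * (ennreal C * ennreal (Gamma (p - m / 2)))
      = ennreal (1 / Gamma p * (C * Gamma (p - m / 2)))"
    using p0 pm C by (simp add: ennreal_mult'[symmetric])
  finally show ?thesis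
    by (simp add: C_def m_def mult.commute)
qed

section \<open>Dividing by the norm of a block of coordinates\<close>

definition sqnorm_on :: "'i set \<Rightarrow> ('i \<Rightarrow> real) \<Rightarrow> real" where
  "sqnorm_on I x = (\<Sum>p\<in>I. (x p)\<^sup>2)"

text \<open>For \<open>I0\<close> indexing the block \<open>x\<^sub>0\<close> and \<open>I1\<close> the other blocks this is the paper's
  \<open>(t\<^sub>1, \<dots>, t\<^sub>k)\<close>. Where \<open>x\<close> vanishes on \<open>I0\<close> the division gives the junk value 0;
  this happens only on a null set.\<close>

definition ratio_by_norm :: "'i set \<Rightarrow> 'i set \<Rightarrow> ('i \<Rightarrow> real) \<Rightarrow> 'i \<Rightarrow> real" where
  "ratio_by_norm I0 I1 x = (\<lambda>q\<in>I1. x q / sqrt (sqnorm_on I0 x))"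

lemma sqnorm_on_nonneg: "sqnorm_on I x \<ge> 0"
  by (simp add: sqnorm_on_def sum_nonneg)

lemma sqnorm_on_scale: "I \<subseteq> J \<Longrightarrow> sqnorm_on I (\<lambda>p\<in>J. c * x p) = c\<^sup>2 * sqnorm_on I x"
  by (auto simp: sqnorm_on_def sum_distrib_left power_mult_distrib intro!: sum.cong)

lemma sqnorm_on_merge: "I \<inter> J = {} \<Longrightarrow> sqnorm_on I (merge I J (x, y)) = sqnorm_on I x"
  by (auto simp: sqnorm_on_def intro!: sum.cong)

lemma borel_measurable_sqnorm_on[measurable (raw)]:
  "(\<And>p. p \<in> I \<Longrightarrow> (\<lambda>x. f x p) \<in> borel_measurable M) \<Longrightarrow> (\<lambda>x. sqnorm_on I (f x)) \<in> borel_measurable M"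
  unfolding sqnorm_on_def by measurable

lemma measurable_ratio_by_norm[measurable]:
  "ratio_by_norm I0 I1 \<in> measurable (PiM (I0 \<union> I1) (\<lambda>_. lborel)) (PiM I1 (\<lambda>_. lborel))"
  unfolding ratio_by_norm_def by measurable

lemma ratio_by_norm_merge_scaled:
  assumes "I0 \<inter> I1 = {}" "sqnorm_on I0 z > 0" "t \<in> extensional I1"
  shows "ratio_by_norm I0 I1 (merge I0 I1 (z, \<lambda>q\<in>I1. sqrt (sqnorm_on I0 z) * t q)) = t"
  using assms by (auto simp: ratio_by_norm_def sqnorm_on_merge extensional_def fun_eq_iff)

lemma AE_PiM_sqnorm_on_pos:
  assumes "finite I" "I \<noteq> {}"
  shows "AE x in PiM I (\<lambda>_. lborel). sqnorm_on I x > 0"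
proof -
  interpret product_sigma_finite "\<lambda>_. lborel" by standard
  obtain p where p: "p \<in> I"
    using assms(2) by blast
  define B where "B = Pi\<^sub>E I (\<lambda>q. if q = p then {0::real} else UNIV)"
  have "emeasure (PiM I (\<lambda>_. lborel)) B = (\<Prod>q\<in>I. emeasure lborel (if q = p then {0::real} else UNIV))"
    unfolding B_def by (rule emeasure_PiM) (auto simp: assms(1))
  also have "\<dots> = 0"
    using p assms(1) by (intro prod_zero) auto
  finally have "B \<in> null_sets (PiM I (\<lambda>_. lborel))"
    unfolding B_def by (auto intro!: null_setsI sets_PiM_I_finite simp: assms(1))
  moreover have "x \<in> B" if "x \<in> space (PiM I (\<lambda>_. lborel))" "\<not> sqnorm_on I x > 0" for x
  proof -
    have "(x p)\<^sup>2 \<le> sqnorm_on I x"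
      unfolding sqnorm_on_def using p assms(1) by (intro member_le_sum) auto
    then have "(x p)\<^sup>2 \<le> 0"
      using that(2) by linarith
    then have "x p = 0"
      by simp
    then show "x \<in> B"
      using that(1) by (auto simp: B_def space_PiM PiE_def Pi_def)
  qed
  ultimately show ?thesis
    by (intro AE_I') auto
qed

lemma nn_integral_fiber_ratio_by_norm:
  fixes f g :: "('i \<Rightarrow> real) \<Rightarrow> ennreal"
  assumes I: "finite I1" "I0 \<inter> I1 = {}"
    and z: "z \<in> space (PiM I0 (\<lambda>_. lborel))" "sqnorm_on I0 z > 0"
    and [measurable]: "f \<in> borel_measurable (PiM (I0 \<union> I1) (\<lambda>_. lborel))"
    and [measurable]: "g \<in> borel_measurable (PiM I1 (\<lambda>_. lborel))"
  shows "(\<integral>\<^sup>+y. f (merge I0 I1 (z, y)) * g (ratio_by_norm I0 I1 (merge I0 I1 (z, y))) \<partial>PiM I1 (\<lambda>_. lborel))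
    = (\<integral>\<^sup>+t. ennreal (sqrt (sqnorm_on I0 z) ^ card I1)
              * f (merge I0 I1 (z, \<lambda>q\<in>I1. sqrt (sqnorm_on I0 z) * t q)) * g t \<partial>PiM I1 (\<lambda>_. lborel))"
proof -
  define r where "r = sqrt (sqnorm_on I0 z)"
  have "r > 0"
    using z(2) by (simp add: r_def)
  have [measurable]: "(\<lambda>y. merge I0 I1 (z, y)) \<in> measurable (PiM I1 (\<lambda>_. lborel)) (PiM (I0 \<union> I1) (\<lambda>_. lborel))"
    using measurable_compose[OF measurable_Pair1'[OF z(1)] measurable_merge] by (simp add: comp_def)
  have "(\<integral>\<^sup>+y. f (merge I0 I1 (z, y)) * g (ratio_by_norm I0 I1 (merge I0 I1 (z, y))) \<partial>PiM I1 (\<lambda>_. lborel))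
      = ennreal (r ^ card I1) * (\<integral>\<^sup>+t. f (merge I0 I1 (z, \<lambda>q\<in>I1. r * t q))
                                      * g (ratio_by_norm I0 I1 (merge I0 I1 (z, \<lambda>q\<in>I1. r * t q))) \<partial>PiM I1 (\<lambda>_. lborel))"
    by (intro nn_integral_PiM_lborel_scale I(1) \<open>r > 0\<close>) measurable
  also have "\<dots> = ennreal (r ^ card I1) * (\<integral>\<^sup>+t. f (merge I0 I1 (z, \<lambda>q\<in>I1. r * t q)) * g t \<partial>PiM I1 (\<lambda>_. lborel))"
    using ratio_by_norm_merge_scaled[OF I(2) z(2)]
    by (auto simp: r_def space_PiM PiE_def intro!: nn_integral_cong arg_cong2[where f="(*)"])
  also have "\<dots> = (\<integral>\<^sup>+t. ennreal (r ^ card I1) * f (merge I0 I1 (z, \<lambda>q\<in>I1. r * t q)) * g t \<partial>PiM I1 (\<lambda>_. lborel))"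
    by (subst nn_integral_cmult[symmetric]) (measurable, simp add: mult.assoc)
  finally show ?thesis
    by (simp add: r_def)
qed

lemma nn_integral_ratio_by_norm:
  fixes f g :: "('i \<Rightarrow> real) \<Rightarrow> ennreal"
  assumes I: "finite I0" "finite I1" "I0 \<inter> I1 = {}" "I0 \<noteq> {}"
    and [measurable]: "f \<in> borel_measurable (PiM (I0 \<union> I1) (\<lambda>_. lborel))"
    and [measurable]: "g \<in> borel_measurable (PiM I1 (\<lambda>_. lborel))"
  shows "(\<integral>\<^sup>+x. f x * g (ratio_by_norm I0 I1 x) \<partial>PiM (I0 \<union> I1) (\<lambda>_. lborel))
    = (\<integral>\<^sup>+t. (\<integral>\<^sup>+z. ennreal (sqrt (sqnorm_on I0 z) ^ card I1)
                     * f (merge I0 I1 (z, \<lambda>q\<in>I1. sqrt (sqnorm_on I0 z) * t q)) \<partial>PiM I0 (\<lambda>_. lborel))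
            * g t \<partial>PiM I1 (\<lambda>_. lborel))"
proof -
  interpret product_sigma_finite "\<lambda>_. lborel" by standard
  interpret P0: sigma_finite_measure "PiM I0 (\<lambda>_. lborel)" by (rule sigma_finite[OF I(1)])
  interpret P1: sigma_finite_measure "PiM I1 (\<lambda>_. lborel)" by (rule sigma_finite[OF I(2)])
  interpret P01: pair_sigma_finite "PiM I0 (\<lambda>_. lborel)" "PiM I1 (\<lambda>_. lborel)" ..
  define H where "H z t = ennreal (sqrt (sqnorm_on I0 z) ^ card I1)
                          * f (merge I0 I1 (z, \<lambda>q\<in>I1. sqrt (sqnorm_on I0 z) * t q))" for z t
  have [measurable]: "(\<lambda>(z, t). H z t) \<in> borel_measurable (PiM I0 (\<lambda>_. lborel) \<Otimes>\<^sub>M PiM I1 (\<lambda>_. lborel))"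
    unfolding H_def by measurable
  have "(\<integral>\<^sup>+x. f x * g (ratio_by_norm I0 I1 x) \<partial>PiM (I0 \<union> I1) (\<lambda>_. lborel))
      = (\<integral>\<^sup>+z. \<integral>\<^sup>+y. f (merge I0 I1 (z, y)) * g (ratio_by_norm I0 I1 (merge I0 I1 (z, y)))
           \<partial>PiM I1 (\<lambda>_. lborel) \<partial>PiM I0 (\<lambda>_. lborel))"
    by (rule product_nn_integral_fold[OF I(3,1,2)]) measurable
  also have "\<dots> = (\<integral>\<^sup>+z. \<integral>\<^sup>+t. H z t * g t \<partial>PiM I1 (\<lambda>_. lborel) \<partial>PiM I0 (\<lambda>_. lborel))"
  proof (rule nn_integral_cong_AE, rule AE_mp[OF AE_PiM_sqnorm_on_pos[OF I(1,4)]], intro AE_I2 impI)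
    fix z assume "z \<in> space (PiM I0 (\<lambda>_. lborel))" "sqnorm_on I0 z > 0"
    from nn_integral_fiber_ratio_by_norm[OF I(2,3) this assms(5,6)]
    show "(\<integral>\<^sup>+y. f (merge I0 I1 (z, y)) * g (ratio_by_norm I0 I1 (merge I0 I1 (z, y))) \<partial>PiM I1 (\<lambda>_. lborel))
        = (\<integral>\<^sup>+t. H z t * g t \<partial>PiM I1 (\<lambda>_. lborel))"
      by (simp only: H_def)
  qed
  also have "\<dots> = (\<integral>\<^sup>+t. \<integral>\<^sup>+z. H z t * g t \<partial>PiM I0 (\<lambda>_. lborel) \<partial>PiM I1 (\<lambda>_. lborel))"
    by (rule P01.Fubini'[symmetric]) measurable
  also have "\<dots> = (\<integral>\<^sup>+t. (\<integral>\<^sup>+z. H z t \<partial>PiM I0 (\<lambda>_. lborel)) * g t \<partial>PiM I1 (\<lambda>_. lborel))"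
    by (intro nn_integral_cong nn_integral_multc) measurable
  finally show ?thesis
    by (simp only: H_def)
qed

lemma distr_density_ratio_by_norm:
  assumes I: "finite I0" "finite I1" "I0 \<inter> I1 = {}" "I0 \<noteq> {}"
    and [measurable]: "f \<in> borel_measurable (PiM (I0 \<union> I1) (\<lambda>_. lborel))"
  shows "distr (density (PiM (I0 \<union> I1) (\<lambda>_. lborel)) f) (PiM I1 (\<lambda>_. lborel)) (ratio_by_norm I0 I1)
    = density (PiM I1 (\<lambda>_. lborel))
        (\<lambda>t. \<integral>\<^sup>+z. ennreal (sqrt (sqnorm_on I0 z) ^ card I1)
                   * f (merge I0 I1 (z, \<lambda>q\<in>I1. sqrt (sqnorm_on I0 z) * t q)) \<partial>PiM I0 (\<lambda>_. lborel))"
    (is "_ = density _ ?g")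
proof (rule measure_eqI)
  interpret product_sigma_finite "\<lambda>_. lborel" by standard
  interpret P0: sigma_finite_measure "PiM I0 (\<lambda>_. lborel)" by (rule sigma_finite[OF I(1)])
  fix A assume "A \<in> sets (distr (density (PiM (I0 \<union> I1) (\<lambda>_. lborel)) f) (PiM I1 (\<lambda>_. lborel)) (ratio_by_norm I0 I1))"
  then have [measurable]: "A \<in> sets (PiM I1 (\<lambda>_. lborel))"
    by simp
  have "emeasure (distr (density (PiM (I0 \<union> I1) (\<lambda>_. lborel)) f) (PiM I1 (\<lambda>_. lborel)) (ratio_by_norm I0 I1)) A
      = (\<integral>\<^sup>+x. f x * indicator A (ratio_by_norm I0 I1 x) \<partial>PiM (I0 \<union> I1) (\<lambda>_. lborel))"
    by (subst emeasure_distr) (auto simp: emeasure_density intro!: nn_integral_cong split: split_indicator)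
  also have "\<dots> = (\<integral>\<^sup>+t. ?g t * indicator A t \<partial>PiM I1 (\<lambda>_. lborel))"
    by (rule nn_integral_ratio_by_norm[OF I]) measurable
  also have "\<dots> = emeasure (density (PiM I1 (\<lambda>_. lborel)) ?g) A"
    by (rule emeasure_density[symmetric]) measurable
  finally show "emeasure (distr (density (PiM (I0 \<union> I1) (\<lambda>_. lborel)) f) (PiM I1 (\<lambda>_. lborel)) (ratio_by_norm I0 I1)) A
      = emeasure (density (PiM I1 (\<lambda>_. lborel)) ?g) A" .
qed simp

lemma nn_integral_radial_scale:
  fixes F :: "real \<Rightarrow> ennreal"
  assumes "finite I" "a > 0"
    and [measurable]: "(\<lambda>z. F (sqnorm_on I z)) \<in> borel_measurable (PiM I (\<lambda>_. lborel))"
  shows "(\<integral>\<^sup>+z. F (a * sqnorm_on I z) \<partial>PiM I (\<lambda>_. lborel))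
           = ennreal (a powr (- real (card I) / 2)) * (\<integral>\<^sup>+z. F (sqnorm_on I z) \<partial>PiM I (\<lambda>_. lborel))"
proof -
  define c where "c = a powr (-1/2)"
  have c: "c > 0" "a * c\<^sup>2 = 1" "c ^ card I = a powr (- real (card I) / 2)"
    using assms(2) by (simp_all add: c_def powr_power powr_add[symmetric])
  have "(\<lambda>z. \<lambda>p\<in>I. sqrt a * z p) \<in> measurable (PiM I (\<lambda>_. lborel)) (PiM I (\<lambda>_. lborel))"
    by measurable
  from measurable_compose[OF this assms(3)]
  have "(\<lambda>z. F (sqnorm_on I (\<lambda>p\<in>I. sqrt a * z p))) \<in> borel_measurable (PiM I (\<lambda>_. lborel))"
    by simp
  then have [measurable]: "(\<lambda>z. F (a * sqnorm_on I z)) \<in> borel_measurable (PiM I (\<lambda>_. lborel))"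
    using assms(2) by (simp add: sqnorm_on_scale)
  have "(\<integral>\<^sup>+z. F (a * sqnorm_on I z) \<partial>PiM I (\<lambda>_. lborel))
      = ennreal (c ^ card I) * (\<integral>\<^sup>+z. F (a * sqnorm_on I (\<lambda>p\<in>I. c * z p)) \<partial>PiM I (\<lambda>_. lborel))"
    by (rule nn_integral_PiM_lborel_scale[OF assms(1) c(1)]) measurable
  then show ?thesis
    using c by (simp add: sqnorm_on_scale mult.assoc[symmetric])
qed

section \<open>Elliptical densities\<close>

lemma nn_integral_radial_kernel_scale:
  fixes F :: "real \<Rightarrow> ennreal"
  assumes "finite I" "a > 0"
    and [measurable]: "(\<lambda>z. F (sqnorm_on I z)) \<in> borel_measurable (PiM I (\<lambda>_. lborel))"
  shows "(\<integral>\<^sup>+z. ennreal (sqrt (sqnorm_on I z) ^ m) * F (a * sqnorm_on I z) \<partial>PiM I (\<lambda>_. lborel))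
           = ennreal (a powr (- (real (card I) + real m) / 2))
             * (\<integral>\<^sup>+z. ennreal (sqrt (sqnorm_on I z) ^ m) * F (sqnorm_on I z) \<partial>PiM I (\<lambda>_. lborel))"
proof -
  define H where "H s = ennreal (a powr (- real m / 2)) * ennreal (sqrt s ^ m) * F s" for s
  have [measurable]: "(\<lambda>z. H (sqnorm_on I z)) \<in> borel_measurable (PiM I (\<lambda>_. lborel))"
    unfolding H_def by measurable
  have "sqrt (sqnorm_on I z) ^ m = a powr (- real m / 2) * sqrt (a * sqnorm_on I z) ^ m" for z
    using assms(2)
    by (simp add: real_sqrt_mult power_mult_distrib powr_half_sqrt[symmetric] powr_power powr_add[symmetric])
  then have "(\<integral>\<^sup>+z. ennreal (sqrt (sqnorm_on I z) ^ m) * F (a * sqnorm_on I z) \<partial>PiM I (\<lambda>_. lborel))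
      = (\<integral>\<^sup>+z. H (a * sqnorm_on I z) \<partial>PiM I (\<lambda>_. lborel))"
    by (simp add: H_def ennreal_mult')
  also have "\<dots> = ennreal (a powr (- real (card I) / 2)) * (\<integral>\<^sup>+z. H (sqnorm_on I z) \<partial>PiM I (\<lambda>_. lborel))"
    by (rule nn_integral_radial_scale[OF assms(1,2)]) measurable
  also have "(\<integral>\<^sup>+z. H (sqnorm_on I z) \<partial>PiM I (\<lambda>_. lborel))
      = ennreal (a powr (- real m / 2)) * (\<integral>\<^sup>+z. ennreal (sqrt (sqnorm_on I z) ^ m) * F (sqnorm_on I z) \<partial>PiM I (\<lambda>_. lborel))"
    unfolding H_def by (subst nn_integral_cmult[symmetric]) (measurable, simp add: mult.assoc)
  finally show ?thesis
    using assms(2) by (simp add: mult.assoc[symmetric] ennreal_mult'[symmetric] powr_add[symmetric] diff_divide_distrib)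
qed

lemma prob_space_density_mult_const:
  assumes "prob_space (density N (\<lambda>x. g x * K))" "g \<in> borel_measurable N"
    and "integral\<^sup>N N g = ennreal J" "J > 0"
  shows "K = ennreal (1 / J)"
proof -
  have "1 = emeasure (density N (\<lambda>x. g x * K)) (space N)"
    using prob_space.emeasure_space_1[OF assms(1)] by simp
  also have "\<dots> = ennreal J * K"
    using assms(2,3) by (simp add: emeasure_density nn_integral_multc)
  finally show ?thesis
    using ennreal_eq_divide_of_mult_eq[of J 1 K] assms(4) by simp
qed

lemma distr_ratio_by_norm_elliptical:
  fixes X :: "'a \<Rightarrow> 'i \<Rightarrow> real" and F :: "real \<Rightarrow> ennreal" and w :: "'i \<Rightarrow> real"
  assumes I: "finite I0" "finite I1" "I0 \<inter> I1 = {}" "I0 \<noteq> {}"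
    and w: "\<forall>q\<in>I1. w q \<ge> 0"
    and X: "distributed M (PiM (I0 \<union> I1) (\<lambda>_. lborel)) X
              (\<lambda>x. F (sqnorm_on I0 x + (\<Sum>q\<in>I1. w q * (x q)\<^sup>2)))"
  shows "distr M (PiM I1 (\<lambda>_. lborel)) (\<lambda>\<omega>. ratio_by_norm I0 I1 (X \<omega>))
           = density (PiM I1 (\<lambda>_. lborel))
               (\<lambda>t. ennreal ((1 + (\<Sum>q\<in>I1. w q * (t q)\<^sup>2)) powr (- (real (card I0) + real (card I1)) / 2))
                    * (\<integral>\<^sup>+z. ennreal (sqrt (sqnorm_on I0 z) ^ card I1) * F (sqnorm_on I0 z) \<partial>PiM I0 (\<lambda>_. lborel)))"
proof -
  let ?Z = "PiM I0 (\<lambda>_. lborel)"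
  let ?T = "PiM I1 (\<lambda>_. lborel)"
  let ?P = "PiM (I0 \<union> I1) (\<lambda>_. lborel)"
  define f where "f x = F (sqnorm_on I0 x + (\<Sum>q\<in>I1. w q * (x q)\<^sup>2))" for x
  have [measurable]: "f \<in> borel_measurable ?P" "X \<in> measurable M ?P" and distr_X: "distr M ?P X = density ?P f"
    using X unfolding distributed_def f_def[abs_def] by simp_all
  have f_merge: "f (merge I0 I1 (z, y)) = F (sqnorm_on I0 z + (\<Sum>q\<in>I1. w q * (y q)\<^sup>2))" for z y
    using I(3) by (auto simp: f_def sqnorm_on_merge intro!: arg_cong[where f=F] sum.cong)
  \<comment> \<open>\<open>F\<close> itself need not be Borel; \<open>F (|z|\<^sup>2)\<close> is, being the density at \<open>y = 0\<close>.\<close>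
  have "(\<lambda>z. f (merge I0 I1 (z, \<lambda>q\<in>I1. 0))) \<in> borel_measurable ?Z"
    by measurable
  then have [measurable]: "(\<lambda>z. F (sqnorm_on I0 z)) \<in> borel_measurable ?Z"
    by (simp add: f_merge)
  have kernel: "(\<integral>\<^sup>+z. ennreal (sqrt (sqnorm_on I0 z) ^ card I1)
                     * f (merge I0 I1 (z, \<lambda>q\<in>I1. sqrt (sqnorm_on I0 z) * t q)) \<partial>?Z)
      = ennreal ((1 + (\<Sum>q\<in>I1. w q * (t q)\<^sup>2)) powr (- (real (card I0) + real (card I1)) / 2))
        * (\<integral>\<^sup>+z. ennreal (sqrt (sqnorm_on I0 z) ^ card I1) * F (sqnorm_on I0 z) \<partial>?Z)" for t
  proof -
    define u where "u = (\<Sum>q\<in>I1. w q * (t q)\<^sup>2)"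
    have "u \<ge> 0"
      using w by (auto simp: u_def intro!: sum_nonneg)
    have "f (merge I0 I1 (z, \<lambda>q\<in>I1. sqrt (sqnorm_on I0 z) * t q)) = F ((1 + u) * sqnorm_on I0 z)" for z
      using sqnorm_on_nonneg[of I0 z]
      by (simp add: f_merge u_def power_mult_distrib algebra_simps sum_distrib_left)
    then show ?thesis
      using nn_integral_radial_kernel_scale[OF I(1), of "1 + u" F "card I1"] \<open>u \<ge> 0\<close>
      by (simp add: u_def)
  qed
  have "distr M ?T (\<lambda>\<omega>. ratio_by_norm I0 I1 (X \<omega>)) = distr (distr M ?P X) ?T (ratio_by_norm I0 I1)"
    by (subst distr_distr) (simp_all add: comp_def)
  also have "\<dots> = density ?T (\<lambda>t. \<integral>\<^sup>+z. ennreal (sqrt (sqnorm_on I0 z) ^ card I1)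
                   * f (merge I0 I1 (z, \<lambda>q\<in>I1. sqrt (sqnorm_on I0 z) * t q)) \<partial>?Z)"
    unfolding distr_X by (rule distr_density_ratio_by_norm[OF I]) measurable
  finally show ?thesis
    by (simp only: kernel)
qed

theorem distributed_ratio_by_norm_elliptical:
  fixes X :: "'a \<Rightarrow> 'i \<Rightarrow> real" and F :: "real \<Rightarrow> ennreal" and w :: "'i \<Rightarrow> real"
  assumes M: "prob_space M"
    and I: "finite I0" "finite I1" "I0 \<inter> I1 = {}" "I0 \<noteq> {}"
    and w: "\<forall>q\<in>I1. w q > 0"
    and X: "distributed M (PiM (I0 \<union> I1) (\<lambda>_. lborel)) X
              (\<lambda>x. F (sqnorm_on I0 x + (\<Sum>q\<in>I1. w q * (x q)\<^sup>2)))"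
  shows "distributed M (PiM I1 (\<lambda>_. lborel)) (\<lambda>\<omega>. ratio_by_norm I0 I1 (X \<omega>))
           (\<lambda>t. ennreal (Gamma ((real (card I0) + real (card I1)) / 2) * (\<Prod>q\<in>I1. sqrt (w q))
                          / (Gamma (real (card I0) / 2) * pi powr (real (card I1) / 2))
                          * (1 + (\<Sum>q\<in>I1. w q * (t q)\<^sup>2)) powr (- (real (card I0) + real (card I1)) / 2)))"
proof -
  interpret M: prob_space M by (rule M)
  define N where "N = real (card I0) + real (card I1)"
  define \<phi> where "\<phi> t = (1 + (\<Sum>q\<in>I1. w q * (t q)\<^sup>2)) powr (- N / 2)" for t
  define K where "K = (\<integral>\<^sup>+z. ennreal (sqrt (sqnorm_on I0 z) ^ card I1) * F (sqnorm_on I0 z) \<partial>PiM I0 (\<lambda>_. lborel))"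
  define J where "J = Gamma (real (card I0) / 2) * pi powr (real (card I1) / 2) / (Gamma (N / 2) * (\<Prod>q\<in>I1. sqrt (w q)))"
  have distr_T: "distr M (PiM I1 (\<lambda>_. lborel)) (\<lambda>\<omega>. ratio_by_norm I0 I1 (X \<omega>))
      = density (PiM I1 (\<lambda>_. lborel)) (\<lambda>t. ennreal (\<phi> t) * K)"
    using distr_ratio_by_norm_elliptical[OF I _ X] w by (simp add: \<phi>_def K_def N_def less_imp_le)
  have "card I0 > 0"
    using I by (simp add: card_gt_0_iff)
  then have J_pos: "J > 0"
    using w by (auto simp: J_def N_def intro!: divide_pos_pos mult_pos_pos prod_pos Gamma_real_pos)
  have "K = ennreal (1 / J)"
  proof (rule prob_space_density_mult_const)
    have [measurable]: "X \<in> measurable M (PiM (I0 \<union> I1) (\<lambda>_. lborel))"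
      using X by (rule distributed_measurable)
    show "prob_space (density (PiM I1 (\<lambda>_. lborel)) (\<lambda>t. ennreal (\<phi> t) * K))"
      unfolding distr_T[symmetric] by (rule M.prob_space_distr) measurable
    show "integral\<^sup>N (PiM I1 (\<lambda>_. lborel)) (\<lambda>t. ennreal (\<phi> t)) = ennreal J"
      using nn_integral_multivariate_t_kernel[OF I(2) w, of "N / 2"] \<open>card I0 > 0\<close>
      by (simp add: \<phi>_def J_def N_def add_divide_distrib diff_divide_distrib)
  qed (simp_all add: \<phi>_def J_pos)
  then have "ennreal (\<phi> t) * K = ennreal (1 / J * \<phi> t)" for t
    using J_pos by (simp add: ennreal_mult''[symmetric])
  then show ?thesis
    using distr_T distributed_measurable[OF X] by (simp add: distributed_def J_def \<phi>_def N_def field_simps)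
qed

section \<open>Block vectors\<close>

lemma blk_idx_Sigma: "blk_idx n a b = Sigma {a..b} (\<lambda>i. {..<n i})"
  by (auto simp: blk_idx_def)

lemma finite_blk_idx[simp]: "finite (blk_idx n a b)"
  by (simp add: blk_idx_Sigma)

lemma card_blk_idx: "card (blk_idx n a b) = (\<Sum>i\<in>{a..b}. n i)"
  by (simp add: blk_idx_Sigma card_SigmaI)

lemma blk_idx_split_first: "a \<le> b \<Longrightarrow> blk_idx n a b = blk_idx n a a \<union> blk_idx n (Suc a) b"
  by (auto simp: blk_idx_def)

lemma blk_idx_first_disjoint: "blk_idx n a a \<inter> blk_idx n (Suc a) b = {}"
  by (auto simp: blk_idx_def)

lemma blk_lebesgue_split_first:
  "a \<le> b \<Longrightarrow> blk_lebesgue n a b = PiM (blk_idx n a a \<union> blk_idx n (Suc a) b) (\<lambda>_. lborel)"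
  by (simp add: blk_lebesgue_def blk_idx_split_first[symmetric])

lemma sum_blk_sqnorm:
  "(\<Sum>i\<in>{a..b}. c i * blk_sqnorm n x i) = (\<Sum>q\<in>blk_idx n a b. c (fst q) * (x q)\<^sup>2)"
  by (simp add: blk_idx_Sigma blk_sqnorm_def sum.Sigma sum_distrib_left split_beta)

lemma blk_sqnorm_eq_sqnorm_on: "blk_sqnorm n x i = sqnorm_on (blk_idx n i i) x"
  using sum_blk_sqnorm[where c="\<lambda>_. 1" and a=i and b=i] by (simp add: sqnorm_on_def)

lemma ratio_by_norm_blk:
  "ratio_by_norm (blk_idx n a a) J x = restrict (\<lambda>(i, j). x (i, j) / sqrt (blk_sqnorm n x a)) J"
  by (simp add: ratio_by_norm_def blk_sqnorm_eq_sqnorm_on case_prod_beta')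

lemma prod_blk_idx: "(\<Prod>q\<in>blk_idx n a b. c (fst q)) = (\<Prod>i\<in>{a..b}. c i ^ n i)"
proof -
  have "(\<Prod>q\<in>blk_idx n a b. c (fst q)) = (\<Prod>(i, j)\<in>Sigma {a..b} (\<lambda>i. {..<n i}). c i)"
    by (simp add: blk_idx_Sigma case_prod_beta)
  also have "\<dots> = (\<Prod>i\<in>{a..b}. c i ^ n i)"
    by (subst prod.Sigma[symmetric]) auto
  finally show ?thesis .
qed

lemma sum_blk_sqnorm_normalize:
  fixes \<sigma> :: "nat \<Rightarrow> real"
  assumes "\<forall>i\<le>k. \<sigma> i > 0"
  shows "(\<Sum>i\<le>k. \<sigma> i powr (-2) * blk_sqnorm n x i)
      = \<sigma> 0 powr (-2) * (sqnorm_on (blk_idx n 0 0) x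
            + (\<Sum>q\<in>blk_idx n 1 k. (\<sigma> (fst q) ^ 2 / \<sigma> 0 ^ 2) powr (-1) * (x q)\<^sup>2))"
proof -
  have "\<sigma> i powr (-2) = \<sigma> 0 powr (-2) * (\<sigma> i ^ 2 / \<sigma> 0 ^ 2) powr (-1)" if "i \<in> {1..k}" for i
  proof -
    have "\<sigma> 0 > 0" "\<sigma> i > 0"
      using assms that by auto
    then show ?thesis
      by (simp add: powr_minus field_simps)
  qed
  then have "(\<Sum>i\<in>{1..k}. \<sigma> i powr (-2) * blk_sqnorm n x i)
      = \<sigma> 0 powr (-2) * (\<Sum>i\<in>{1..k}. (\<sigma> i ^ 2 / \<sigma> 0 ^ 2) powr (-1) * blk_sqnorm n x i)"
    by (simp add: sum_distrib_left mult.assoc)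
  moreover have "(\<Sum>i\<le>k. \<sigma> i powr (-2) * blk_sqnorm n x i)
      = \<sigma> 0 powr (-2) * blk_sqnorm n x 0 + (\<Sum>i\<in>{1..k}. \<sigma> i powr (-2) * blk_sqnorm n x i)"
    by (simp add: atMost_atLeast0 sum.atLeast_Suc_atMost)
  ultimately show ?thesis
    unfolding sum_blk_sqnorm blk_sqnorm_eq_sqnorm_on[of n x 0] by (simp add: distrib_left)
qed

theorem mainTheorem3:
  fixes M :: "'a measure" and k :: nat and n :: "nat \<Rightarrow> nat" and \<sigma> :: "nat \<Rightarrow> real"
    and h :: "real \<Rightarrow> real" and X :: "'a \<Rightarrow> (nat \<times> nat) \<Rightarrow> real"
  assumes "prob_space M"
    and "k \<ge> 1"
    and "\<forall>i\<le>k. n i > 0"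
    and "\<forall>i\<le>k. \<sigma> i > 0"
    and "\<forall>t\<ge>0. h t \<ge> 0"
    and "distributed M (blk_lebesgue n 0 k) X
           (\<lambda>x. ennreal ((\<Prod>i\<le>k. \<sigma> i powr (- real (n i)))
                   * h (\<Sum>i\<le>k. \<sigma> i powr (-2) * blk_sqnorm n x i)))"
  shows "distributed M (blk_lebesgue n 1 k)
           (\<lambda>\<omega>. restrict (\<lambda>(i, j). X \<omega> (i, j) / sqrt (blk_sqnorm n (X \<omega>) 0)) (blk_idx n 1 k))
           (\<lambda>t. ennreal (
              Gamma (real (\<Sum>i\<le>k. n i) / 2)
                * (\<Prod>i\<in>{1..k}. (\<sigma> i ^ 2 / \<sigma> 0 ^ 2) powr (- real (n i) / 2))
              / (Gamma (real (n 0) / 2) * pi powr (real (\<Sum>i\<in>{1..k}. n i) / 2))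
              * (1 + (\<Sum>i\<in>{1..k}. (\<sigma> i ^ 2 / \<sigma> 0 ^ 2) powr (-1) * blk_sqnorm n t i))
                  powr (- real (\<Sum>i\<le>k. n i) / 2)))"
proof -
  define I0 where "I0 = blk_idx n 0 0"
  define I1 where "I1 = blk_idx n 1 k"
  define w where "w q = (\<sigma> (fst q) ^ 2 / \<sigma> 0 ^ 2) powr (-1)" for q :: "nat \<times> nat"
  define F where "F s = ennreal ((\<Prod>i\<le>k. \<sigma> i powr (- real (n i))) * h (\<sigma> 0 powr (-2) * s))" for s
  have "I0 \<noteq> {}"
    using assms(3) by (auto simp: I0_def blk_idx_def)
  then have I: "finite I0" "finite I1" "I0 \<inter> I1 = {}" "I0 \<noteq> {}"
    using blk_idx_first_disjoint[of n 0 k] by (simp_all add: I0_def I1_def)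
  have w_pos: "\<forall>q\<in>I1. w q > 0"
    using assms(4) by (auto simp: w_def I1_def blk_idx_def intro!: divide_pos_pos)
  have "distributed M (PiM (I0 \<union> I1) (\<lambda>_. lborel)) X (\<lambda>x. F (sqnorm_on I0 x + (\<Sum>q\<in>I1. w q * (x q)\<^sup>2)))"
    using assms(6) blk_lebesgue_split_first[of 0 k n]
    by (simp add: F_def I0_def I1_def w_def sum_blk_sqnorm_normalize[OF assms(4)])
  note T = distributed_ratio_by_norm_elliptical[OF assms(1) I w_pos this]
  have "(\<Prod>q\<in>I1. sqrt (w q)) = (\<Prod>i\<in>{1..k}. (\<sigma> i ^ 2 / \<sigma> 0 ^ 2) powr (- real (n i) / 2))"
    unfolding I1_def w_def prod_blk_idx[of "\<lambda>i. sqrt ((\<sigma> i ^ 2 / \<sigma> 0 ^ 2) powr (-1))"] using assms(4)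
    by (intro prod.cong refl sqrt_powr_neg_one_power) (auto intro!: divide_pos_pos)
  moreover have "(\<Sum>q\<in>I1. w q * (t q)\<^sup>2) = (\<Sum>i\<in>{1..k}. (\<sigma> i ^ 2 / \<sigma> 0 ^ 2) powr (-1) * blk_sqnorm n t i)" for t
    unfolding I1_def w_def by (rule sum_blk_sqnorm[symmetric])
  moreover have "real (card I0) + real (card I1) = real (\<Sum>i\<le>k. n i)"
    by (simp add: I0_def I1_def card_blk_idx atMost_atLeast0 sum.atLeast_Suc_atMost)
  moreover have "card I0 = n 0" "card I1 = (\<Sum>i\<in>{1..k}. n i)" "PiM I1 (\<lambda>_. lborel) = blk_lebesgue n 1 k"
    by (simp_all add: I0_def I1_def card_blk_idx blk_lebesgue_def)
  ultimately show ?thesis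
    using T unfolding I0_def ratio_by_norm_blk by (simp only: I1_def)
qed

end
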